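(* Under the assumptions below, the eigenvalues $\widetilde{\lambda}_n$ of the differential operator $\mathbf{L}$ associated with the polynomials $q_n$ orthonormal with respect to the discrete Sobolev inner product $(f,g)_S$ satisfy $$\lim_{n\to+\infty}\frac{\widetilde{\lambda}_n}{n^{2(aj+b)+3}}=\frac{2\gamma MC_j^2}{(2(aj+b)+3)(2(aj+b)+1)}\quad \text{if } \gamma\neq0,$$ $$\lim_{n\to+\infty}\frac{\widetilde{\lambda}_n}{n^{2(aj+b+1)}}=\frac{\delta MC_j^2}{2(aj+b+1)(2(aj+b)+1)}\quad \text{if } \gamma=0.$$
   Context: Let $\mu$ be a classical nonsymmetric measure on the real line with $d\mu(x)=w(x)dx$ (Jacobi weight $(1-x)^{\alpha}(1+x)^{\beta}$ on $(-1,1)$ with $c\in\{-1,1\}$, or Laguerre weight $x^{\alpha}e^{-x}$ on $(0,\infty)$ with $c=0$), and consider the discrete Sobolev inner product $(f,g)_S=\int f(x)g(x)\,d\mu+Mf^{(j)}(c)g^{(j)}(c)$ with $j\in\mathbb{N}\cup\{0\}$ and $M>0$. Let $\{p_n\}_{n\ge0}$ be the orthonormal polynomials with respect to $\mu$, eigenfunctions of the operator $\mathbf{B}=\sigma(x)\mathcal{D}^2+\tau(x)\mathcal{D}$ with eigenvalues $\lambda_n$, and let $\{q_n\}_{n\ge0}$ be the orthonormal polynomials with respect to $(f,g)_S$, which are eigenfunctions of a differential operator $\mathbf{L}=\sum_{i\ge1}r_i(x)\mathcal{D}^i$ ($\deg r_i\le i$) with eigenvalues $\widetilde{\lambda}_n=\lambda_n+M\alpha_n$,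 where $\alpha_i=0$ for $i\in\{0,1,\dots,j\}$ and $\alpha_n=\sum_{i=j+1}^n(\lambda_i-\lambda_{i-1})K_{i-1}^{(j,j)}(c,c)$ for $n\ge j+1$, with $K_n^{(r,s)}(x,y)=\sum_{i=0}^np_i^{(r)}(x)p_i^{(s)}(y)$. Assume $p_n^{(k)}(c)\approx C_k(-1)^n n^{ak+b}$ for $0\le k\le n$ (where $a_n\approx b_n$ means $a_n/b_n\to1$), with $C_k$ independent of $n$ and $2(ak+b)+1>0$, and assume $\lambda_n=\gamma n^2+\delta n$ with $\gamma,\delta\in\mathbb{R}$. *)

theory Defs
  imports "HOL-Analysis.Analysis" "HOL-Computational_Algebra.Polynomial"
begin

definition jacobi_weight :: "real \<Rightarrow> real \<Rightarrow> real \<Rightarrow> real" where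
  "jacobi_weight \<alpha> \<beta> x = (1 - x) powr \<alpha> * (1 + x) powr \<beta>"

definition laguerre_weight :: "real \<Rightarrow> real \<Rightarrow> real" where
  "laguerre_weight \<alpha> x = x powr \<alpha> * exp (- x)"

text \<open>The classical nonsymmetric setting: weight w on the interval I, with mass point c.\<close>
definition classical_nonsym :: "(real \<Rightarrow> real) \<Rightarrow> real set \<Rightarrow> real \<Rightarrow> bool" where
  "classical_nonsym w I c \<longleftrightarrow>
     (\<exists>\<alpha> \<beta>. \<alpha> > -1 \<and> \<beta> > -1 \<and> w = jacobi_weight \<alpha> \<beta> \<and> I = {-1<..<1} \<and> c \<in> {-1, 1})
   \<or> (\<exists>\<alpha>. \<alpha> > -1 \<and> w = laguerre_weight \<alpha> \<and> I = {0<..} \<and> c = 0)"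

definition orthonormal_polys :: "(real \<Rightarrow> real) \<Rightarrow> real set \<Rightarrow> (nat \<Rightarrow> real poly) \<Rightarrow> bool" where
  "orthonormal_polys w I p \<longleftrightarrow>
     (\<forall>n. degree (p n) = n) \<and>
     (\<forall>m n. set_integrable lborel I (\<lambda>x. poly (p m) x * poly (p n) x * w x) \<and>
            (LINT x:I|lborel. poly (p m) x * poly (p n) x * w x) = (if m = n then 1 else 0))"

definition kernel :: "(nat \<Rightarrow> real poly) \<Rightarrow> nat \<Rightarrow> nat \<Rightarrow> nat \<Rightarrow> real \<Rightarrow> real \<Rightarrow> real" where
  "kernel p n r s x y = (\<Sum>i\<le>n. poly ((pderiv ^^ r) (p i)) x * poly ((pderiv ^^ s) (p i)) y)"

definition sob_alpha :: "(nat \<Rightarrow> real poly) \<Rightarrow> (nat \<Rightarrow> real) \<Rightarrow> nat \<Rightarrow> real \<Rightarrow> nat \<Rightarrow> real" where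
  "sob_alpha p lam j c n =
     (if n \<le> j then 0
      else (\<Sum>i\<in>{j+1..n}. (lam i - lam (i - 1)) * kernel p (i - 1) j j c c))"

definition sob_eigenvalue :: "(nat \<Rightarrow> real poly) \<Rightarrow> (nat \<Rightarrow> real) \<Rightarrow> real \<Rightarrow> nat \<Rightarrow> real \<Rightarrow> nat \<Rightarrow> real" where
  "sob_eigenvalue p lam M j c n = lam n + M * sob_alpha p lam j c n"

end

(*
  With s = a j + b, the kernel K_n = K_n^{(j,j)}(c,c) is the partial sum of p_i^{(j)}(c)^2, whose
  terms grow like C_j^2 n^{2s}; by Stolz-Cesaro, K_n ~ C_j^2 n^{2s+1} / (2s+1).  The increments
  alpha_{n+1} - alpha_n = (lambda_{n+1} - lambda_n) K_n therefore behave like D n^e C_j^2 n^{2s+1} / (2s+1),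
  where (e, D) = (1, 2 gamma) if gamma <> 0 and (0, delta) otherwise, and a second application of
  Stolz-Cesaro gives alpha_n ~ D C_j^2 n^{2s+2+e} / ((2s+1)(2s+2+e)).  Since lambda_n = O(n^2) is of
  lower order, the same asymptotics hold for lambda_n + M alpha_n.  Only these asymptotic
  hypotheses enter.
*)
theory Submission
  imports Defs "HOL-Real_Asymp.Real_Asymp"
begin

lemma stolz_cesaro_zero:
  fixes a b :: "nat \<Rightarrow> real"
  assumes b_mono: "\<And>n. b n < b (Suc n)" and b_lim: "filterlim b at_top sequentially"
    and lim: "(\<lambda>n. (a (Suc n) - a n) / (b (Suc n) - b n)) \<longlonglongrightarrow> 0"
  shows "(\<lambda>n. a n / b n) \<longlonglongrightarrow> 0"
proof (rule tendstoI)
  fix e :: real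
  assume e: "e > 0"
  obtain N where N: "\<And>n. n \<ge> N \<Longrightarrow> \<bar>(a (Suc n) - a n) / (b (Suc n) - b n)\<bar> < e / 2"
    using tendstoD[OF lim, of "e / 2"] e by (auto simp: eventually_sequentially)
  have increment: "\<bar>a (Suc n) - a n\<bar> \<le> e / 2 * (b (Suc n) - b n)" if "n \<ge> N" for n
    using N[OF that] b_mono[of n] by (simp add: divide_less_eq less_imp_le)
  have telescope: "\<bar>a n - a N\<bar> \<le> e / 2 * (b n - b N)" if "n \<ge> N" for n
    using that
  proof (induction n rule: dec_induct)
    case (step m)
    have "\<bar>a (Suc m) - a N\<bar> \<le> \<bar>a m - a N\<bar> + \<bar>a (Suc m) - a m\<bar>"
      using abs_triangle_ineq[of "a m - a N" "a (Suc m) - a m"] by simp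
    also have "\<dots> \<le> e / 2 * (b m - b N) + e / 2 * (b (Suc m) - b m)"
      using step.IH increment[OF step.hyps(1)] by linarith
    also have "\<dots> = e / 2 * (b (Suc m) - b N)"
      by (simp add: right_diff_distrib)
    finally show ?case .
  qed simp
  define B where "B = \<bar>a N\<bar> + e / 2 * \<bar>b N\<bar>"
  show "\<forall>\<^sub>F n in sequentially. dist (a n / b n) 0 < e"
    using filterlim_at_top_dense[THEN iffD1, OF b_lim, rule_format, of "max 0 (B / (e / 2))"]
      eventually_ge_at_top[of N]
  proof eventually_elim
    case (elim n)
    have "\<bar>a n\<bar> \<le> \<bar>a N\<bar> + \<bar>a n - a N\<bar>"
      using abs_triangle_ineq[of "a N" "a n - a N"] by simp
    moreover have "e / 2 * (b n - b N) \<le> e / 2 * \<bar>b N\<bar> + e / 2 * b n"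
      using mult_left_mono[of "- b N" "\<bar>b N\<bar>" "e / 2"] e by (simp add: right_diff_distrib)
    moreover have "B < e / 2 * b n"
      using elim e by (simp add: pos_divide_less_eq mult.commute)
    ultimately have "\<bar>a n\<bar> < e / 2 * b n + e / 2 * b n"
      using telescope[OF elim(2)] unfolding B_def by linarith
    then show ?case
      using elim by (simp add: divide_less_eq)
  qed
qed

lemma stolz_cesaro:
  fixes a b :: "nat \<Rightarrow> real"
  assumes b_mono: "\<And>n. b n < b (Suc n)" and b_lim: "filterlim b at_top sequentially"
    and lim: "(\<lambda>n. (a (Suc n) - a n) / (b (Suc n) - b n)) \<longlonglongrightarrow> L"
  shows "(\<lambda>n. a n / b n) \<longlonglongrightarrow> L"
proof -
  have step_nonzero: "b (Suc n) - b n \<noteq> 0" for n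
    using b_mono[of n] by simp
  \<comment> \<open>Subtracting \<open>L * b n\<close> reduces the claim to the case \<open>L = 0\<close>.\<close>
  have "(\<lambda>n. ((a (Suc n) - L * b (Suc n)) - (a n - L * b n)) / (b (Suc n) - b n)) \<longlonglongrightarrow> 0"
  proof (rule Lim_transform_eventually)
    show "(\<lambda>n. (a (Suc n) - a n) / (b (Suc n) - b n) - L) \<longlonglongrightarrow> 0"
      using tendsto_diff[OF lim tendsto_const, of L] by simp
    show "\<forall>\<^sub>F n in sequentially. (a (Suc n) - a n) / (b (Suc n) - b n) - L
        = ((a (Suc n) - L * b (Suc n)) - (a n - L * b n)) / (b (Suc n) - b n)"
      using step_nonzero by (intro always_eventually allI) (simp add: field_simps)
  qed
  then have "(\<lambda>n. (a n - L * b n) / b n + L) \<longlonglongrightarrow> L"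
    using tendsto_add[OF stolz_cesaro_zero[OF b_mono b_lim] tendsto_const] by simp
  moreover have "\<forall>\<^sub>F n in sequentially. (a n - L * b n) / b n + L = a n / b n"
    using filterlim_at_top_dense[THEN iffD1, OF b_lim, rule_format, of 0]
    by eventually_elim (simp add: field_simps)
  ultimately show ?thesis
    by (rule Lim_transform_eventually)
qed

lemma stolz_cesaro_powr:
  fixes a :: "nat \<Rightarrow> real"
  assumes r: "r > -1" and lim: "(\<lambda>n. (a (Suc n) - a n) / real (Suc n) powr r) \<longlonglongrightarrow> L"
  shows "(\<lambda>n. a n / real n powr (r + 1)) \<longlonglongrightarrow> L / (r + 1)"
proof (rule stolz_cesaro)
  show "real n powr (r + 1) < real (Suc n) powr (r + 1)" for n
    using r by (intro powr_less_mono2) auto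
  show "filterlim (\<lambda>n. real n powr (r + 1)) at_top sequentially"
    using r by real_asymp
  define D where "D n = real (Suc n) powr (r + 1) - real n powr (r + 1)" for n
  have "(\<lambda>n. real (Suc n) powr r / D n) \<longlonglongrightarrow> inverse (r + 1)"
    unfolding D_def using r by real_asymp
  from tendsto_mult[OF lim this]
  have "(\<lambda>n. (a (Suc n) - a n) / D n) \<longlonglongrightarrow> L * inverse (r + 1)"
    by simp
  then show "(\<lambda>n. (a (Suc n) - a n) / D n) \<longlonglongrightarrow> L / (r + 1)"
    by (simp add: divide_inverse)
qed

lemma LIMSEQ_div_Suc_powr:
  fixes f :: "nat \<Rightarrow> real"
  assumes lim: "(\<lambda>n. f n / real n powr r) \<longlonglongrightarrow> L"
  shows "(\<lambda>n. f n / real (Suc n) powr r) \<longlonglongrightarrow> L"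
proof -
  have "(\<lambda>n. real n powr r / real (Suc n) powr r) \<longlonglongrightarrow> 1"
    by real_asymp
  from tendsto_mult[OF lim this]
  have "(\<lambda>n. f n / real n powr r * (real n powr r / real (Suc n) powr r)) \<longlonglongrightarrow> L"
    by simp
  moreover have "\<forall>\<^sub>F n in sequentially. f n / real n powr r * (real n powr r / real (Suc n) powr r)
      = f n / real (Suc n) powr r"
    using eventually_gt_at_top[of 0] by eventually_elim simp
  ultimately show ?thesis
    by (rule Lim_transform_eventually)
qed

lemma LIMSEQ_square_div_powr:
  fixes f :: "nat \<Rightarrow> real"
  assumes lim: "(\<lambda>n. f n / (C * (-1) ^ n * real n powr s)) \<longlonglongrightarrow> 1"
  shows "(\<lambda>n. (f n)\<^sup>2 / real n powr (2 * s)) \<longlonglongrightarrow> C\<^sup>2"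
proof -
  have "C \<noteq> 0"
  proof
    assume "C = 0"
    with lim show False
      by (simp add: LIMSEQ_const_iff)
  qed
  have "(\<lambda>n. C\<^sup>2 * (f n / (C * (-1) ^ n * real n powr s))\<^sup>2) \<longlonglongrightarrow> C\<^sup>2 * 1\<^sup>2"
    by (intro tendsto_intros lim)
  moreover have "C\<^sup>2 * (f n / (C * (-1) ^ n * real n powr s))\<^sup>2 = (f n)\<^sup>2 / real n powr (2 * s)" for n
  proof -
    have "(real n powr s)\<^sup>2 = real n powr (2 * s)"
      by (simp add: power2_eq_square flip: powr_add)
    moreover have "((-1 :: real) ^ n)\<^sup>2 = 1"
      by (simp flip: power_mult)
    ultimately show ?thesis
      using \<open>C \<noteq> 0\<close> by (simp add: power_divide power_mult_distrib)
  qed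
  ultimately show ?thesis
    by simp
qed

lemma kernel_Suc:
  "kernel p (Suc n) r s x y = kernel p n r s x y
     + poly ((pderiv ^^ r) (p (Suc n))) x * poly ((pderiv ^^ s) (p (Suc n))) y"
  by (simp add: kernel_def)

lemma sob_alpha_Suc:
  assumes "j \<le> n"
  shows "sob_alpha p lam j c (Suc n) = sob_alpha p lam j c n + (lam (Suc n) - lam n) * kernel p n j j c c"
  using assms by (simp add: sob_alpha_def)

lemma kernel_diag_asymp:
  assumes asym: "(\<lambda>n. poly ((pderiv ^^ j) (p n)) c / (C * (-1) ^ n * real n powr s)) \<longlonglongrightarrow> 1"
    and s: "2 * s + 1 > 0"
  shows "(\<lambda>n. kernel p n j j c c / real n powr (2 * s + 1)) \<longlonglongrightarrow> C\<^sup>2 / (2 * s + 1)"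
proof (rule stolz_cesaro_powr)
  show "2 * s > -1"
    using s by simp
  have "(\<lambda>n. (poly ((pderiv ^^ j) (p (Suc n))) c)\<^sup>2 / real (Suc n) powr (2 * s)) \<longlonglongrightarrow> C\<^sup>2"
    using LIMSEQ_Suc[OF LIMSEQ_square_div_powr[OF asym]] .
  then show "(\<lambda>n. (kernel p (Suc n) j j c c - kernel p n j j c c) / real (Suc n) powr (2 * s))
      \<longlonglongrightarrow> C\<^sup>2"
    by (simp add: kernel_Suc power2_eq_square)
qed

lemma sob_eigenvalue_asymp:
  assumes asym: "(\<lambda>n. poly ((pderiv ^^ j) (p n)) c / (C * (-1) ^ n * real n powr s)) \<longlonglongrightarrow> 1"
    and s: "2 * s + 1 > 0" and e: "e \<ge> 0"
    and lam_step: "(\<lambda>n. (lam (Suc n) - lam n) / real (Suc n) powr e) \<longlonglongrightarrow> D"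
    and lam_small: "(\<lambda>n. lam n / real n powr (2 * s + 2 + e)) \<longlonglongrightarrow> 0"
  shows "(\<lambda>n. sob_eigenvalue p lam M j c n / real n powr (2 * s + 2 + e))
           \<longlonglongrightarrow> M * D * C\<^sup>2 / ((2 * s + 1) * (2 * s + 2 + e))"
proof -
  let ?\<alpha> = "sob_alpha p lam j c"
  have kernel_lim: "(\<lambda>n. kernel p n j j c c / real (Suc n) powr (2 * s + 1)) \<longlonglongrightarrow> C\<^sup>2 / (2 * s + 1)"
    using LIMSEQ_div_Suc_powr[OF kernel_diag_asymp[OF asym s]] .
  have "(\<lambda>n. (?\<alpha> (Suc n) - ?\<alpha> n) / real (Suc n) powr (2 * s + 1 + e)) \<longlonglongrightarrow> D * (C\<^sup>2 / (2 * s + 1))"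
  proof (rule Lim_transform_eventually)
    show "(\<lambda>n. (lam (Suc n) - lam n) / real (Suc n) powr e * (kernel p n j j c c / real (Suc n) powr (2 * s + 1)))
        \<longlonglongrightarrow> D * (C\<^sup>2 / (2 * s + 1))"
      by (rule tendsto_mult[OF lam_step kernel_lim])
    show "\<forall>\<^sub>F n in sequentially.
        (lam (Suc n) - lam n) / real (Suc n) powr e * (kernel p n j j c c / real (Suc n) powr (2 * s + 1))
        = (?\<alpha> (Suc n) - ?\<alpha> n) / real (Suc n) powr (2 * s + 1 + e)"
      using eventually_ge_at_top[of j]
      by eventually_elim (simp add: sob_alpha_Suc powr_add)
  qed
  from stolz_cesaro_powr[OF _ this]
  have "(\<lambda>n. ?\<alpha> n / real n powr (2 * s + 2 + e)) \<longlonglongrightarrow> D * C\<^sup>2 / ((2 * s + 1) * (2 * s + 2 + e))"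
    using s e by (simp add: add_ac)
  from tendsto_add[OF lam_small tendsto_mult_left[OF this, of M]]
  show ?thesis
    by (simp add: sob_eigenvalue_def add_divide_distrib mult.assoc)
qed

theorem theorem1:
  fixes w :: "real \<Rightarrow> real" and I :: "real set" and c :: real
    and p :: "nat \<Rightarrow> real poly" and \<sigma> \<tau> :: "real poly" and lam :: "nat \<Rightarrow> real"
    and M :: real and j :: nat and a b \<gamma> \<delta> :: real and C :: "nat \<Rightarrow> real"
  assumes cls: "classical_nonsym w I c"
    and orth: "orthonormal_polys w I p"
    and deg_sigma: "degree \<sigma> \<le> 2" and deg_tau: "degree \<tau> \<le> 1"
    and eigen: "\<And>n x. poly \<sigma> x * poly (pderiv (pderiv (p n))) x + poly \<tau> x * poly (pderiv (p n)) x
                        = lam n * poly (p n) x"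
    and M_pos: "M > 0"
    and asym: "\<And>k. (\<lambda>n. poly ((pderiv ^^ k) (p n)) c / (C k * (-1) ^ n * real n powr (a * k + b)))
                      \<longlonglongrightarrow> 1"
    and expo: "\<And>k::nat. 2 * (a * real k + b) + 1 > 0"
    and lam: "\<And>n. lam n = \<gamma> * (real n)^2 + \<delta> * real n"
  shows "(\<gamma> \<noteq> 0 \<longrightarrow>
           (\<lambda>n. sob_eigenvalue p lam M j c n / real n powr (2 * (a * j + b) + 3))
             \<longlonglongrightarrow> 2 * \<gamma> * M * (C j)^2 / ((2 * (a * j + b) + 3) * (2 * (a * j + b) + 1)))
       \<and> (\<gamma> = 0 \<longrightarrow>
           (\<lambda>n. sob_eigenvalue p lam M j c n / real n powr (2 * (a * j + b + 1)))
             \<longlonglongrightarrow> \<delta> * M * (C j)^2 / (2 * (a * j + b + 1) * (2 * (a * j + b) + 1)))"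
proof -
  define s where "s = a * real j + b"
  have asym_j: "(\<lambda>n. poly ((pderiv ^^ j) (p n)) c / (C j * (-1) ^ n * real n powr s)) \<longlonglongrightarrow> 1"
    using asym[of j] by (simp add: s_def)
  have s: "2 * s + 1 > 0"
    using expo[of j] by (simp add: s_def)
  show ?thesis
  proof (intro conjI impI)
    have "(\<lambda>n. (lam (Suc n) - lam n) / real (Suc n) powr 1) \<longlonglongrightarrow> 2 * \<gamma>"
      unfolding lam by real_asymp
    moreover have "(\<lambda>n. lam n / real n powr (2 * s + 2 + 1)) \<longlonglongrightarrow> 0"
      unfolding lam using s by real_asymp
    ultimately have "(\<lambda>n. sob_eigenvalue p lam M j c n / real n powr (2 * s + 2 + 1))
        \<longlonglongrightarrow> M * (2 * \<gamma>) * (C j)\<^sup>2 / ((2 * s + 1) * (2 * s + 2 + 1))"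
      by (intro sob_eigenvalue_asymp[OF asym_j s]) auto
    then show "(\<lambda>n. sob_eigenvalue p lam M j c n / real n powr (2 * (a * j + b) + 3))
        \<longlonglongrightarrow> 2 * \<gamma> * M * (C j)\<^sup>2 / ((2 * (a * j + b) + 3) * (2 * (a * j + b) + 1))"
      by (simp add: s_def algebra_simps)
  next
    assume "\<gamma> = 0"
    then have "(\<lambda>n. (lam (Suc n) - lam n) / real (Suc n) powr 0) \<longlonglongrightarrow> \<delta>"
      by (simp add: lam algebra_simps)
    moreover have "(\<lambda>n. lam n / real n powr (2 * s + 2 + 0)) \<longlonglongrightarrow> 0"
      unfolding lam \<open>\<gamma> = 0\<close> using s by real_asymp
    ultimately have "(\<lambda>n. sob_eigenvalue p lam M j c n / real n powr (2 * s + 2 + 0))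
        \<longlonglongrightarrow> M * \<delta> * (C j)\<^sup>2 / ((2 * s + 1) * (2 * s + 2 + 0))"
      by (intro sob_eigenvalue_asymp[OF asym_j s]) auto
    then show "(\<lambda>n. sob_eigenvalue p lam M j c n / real n powr (2 * (a * j + b + 1)))
        \<longlonglongrightarrow> \<delta> * M * (C j)\<^sup>2 / (2 * (a * j + b + 1) * (2 * (a * j + b) + 1))"
      by (simp add: s_def algebra_simps)
  qed
qed

end
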